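(* Let $\Omega\subset\mathbb C^n$ be an open set and let $f:\Omega\to\mathbb C$ be a holomorphic function which is totally unbounded in $\Omega$. Then for all open sets $U,V\subset\mathbb C^n$ with $U$ connected and $\emptyset\ne V\subseteq U\cap\Omega\ne U$, there is no holomorphic function $F$ on $U$ with $F|_V=f|_V$.
   Context: A holomorphic $f:\Omega\to\mathbb C$ is called totally unbounded in $\Omega$ if for every $w\in\partial\Omega$, every $\delta>0$ and every connected component $E$ of $B(w,\delta)\cap\Omega=\{z\in\Omega:|z-w|<\delta\}$, one has $\sup_{z\in E}|f(z)|=\infty$. *)

theory Defs
  imports "HOL-Analysis.Analysis"
begin

definition complex_linear :: "(complex ^ 'n \<Rightarrow> complex) \<Rightarrow> bool" where
  "complex_linear L \<longleftrightarrow> linear L \<and> (\<forall>c x. L (c *s x) = c * L x)"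

definition holomorphic_n :: "(complex ^ 'n \<Rightarrow> complex) \<Rightarrow> (complex ^ 'n) set \<Rightarrow> bool" where
  "holomorphic_n f S \<longleftrightarrow>
     (\<forall>z\<in>S. \<exists>L. complex_linear L \<and> (f has_derivative L) (at z))"

definition totally_unbounded :: "(complex ^ 'n \<Rightarrow> complex) \<Rightarrow> (complex ^ 'n) set \<Rightarrow> bool" where
  "totally_unbounded f \<Omega> \<longleftrightarrow>
     (\<forall>w\<in>frontier \<Omega>. \<forall>\<delta>>0. \<forall>E\<in>components (ball w \<delta> \<inter> \<Omega>). \<not> bounded (f ` E))"

end

theory Submission
  imports Defs "HOL-Complex_Analysis.Complex_Analysis"
begin

text \<open>If F were holomorphic on U and equal to f on V, the identity theorem (reduced to one
  variable by restricting to complex lines) would give F = f on the whole component W of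
  U \<inter> \<Omega> containing V. As U is connected and not contained in \<Omega>, W accumulates at a point
  w \<in> U \<inter> \<partial>\<Omega>. Being continuous at w, F is bounded on a small ball around w, hence f = F
  is bounded on any component of that ball \<inter> \<Omega> which meets W, since such a component lies
  inside W. This contradicts total unboundedness.\<close>

lemma holomorphic_n_subset: "holomorphic_n f S \<Longrightarrow> T \<subseteq> S \<Longrightarrow> holomorphic_n f T"
  unfolding holomorphic_n_def by blast

lemma holomorphic_n_imp_continuous_on: "holomorphic_n f S \<Longrightarrow> continuous_on S f"
  unfolding holomorphic_n_def
  by (meson continuous_at_imp_continuous_on has_derivative_continuous)

lemma has_derivative_complex_line:
  "((\<lambda>s::complex. a + s *s (d::complex^'n)) has_derivative (\<lambda>s. s *s d)) (at t)"
proof -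
  have "linear (\<lambda>s::complex. s *s d)"
    by (rule linearI) (auto simp: vec_eq_iff algebra_simps)
  then show ?thesis
    by (auto intro!: derivative_eq_intros linear_imp_has_derivative)
qed

lemma open_complex_line_vimage:
  assumes "open S"
  shows "open {s::complex. a + s *s (d::complex^'n) \<in> S}"
  using continuous_open_vimage[OF assms, of "\<lambda>s. a + s *s d"]
    has_derivative_continuous[OF has_derivative_complex_line]
  unfolding vimage_def by blast

lemma convex_complex_line_vimage:
  assumes "convex S"
  shows "convex {s::complex. a + s *s (d::complex^'n) \<in> S}"
proof (rule convexI)
  fix x y :: complex and u v :: real
  assume "x \<in> {s. a + s *s d \<in> S}" "y \<in> {s. a + s *s d \<in> S}" "0 \<le> u" "0 \<le> v" "u + v = 1"
  moreover have "a + (u *\<^sub>R x + v *\<^sub>R y) *s d = u *\<^sub>R (a + x *s d) + v *\<^sub>R (a + y *s d)"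
  proof -
    have "a = u *\<^sub>R a + v *\<^sub>R a"
      using \<open>u + v = 1\<close> by (metis scaleR_add_left scaleR_one)
    then show ?thesis by (auto simp: vec_eq_iff algebra_simps)
  qed
  ultimately show "u *\<^sub>R x + v *\<^sub>R y \<in> {s. a + s *s d \<in> S}"
    using assms by (auto dest: convexD)
qed

lemma holomorphic_n_on_complex_line:
  assumes "holomorphic_n f S"
  shows "(\<lambda>s. f (a + s *s d)) holomorphic_on {s. a + s *s d \<in> S}"
  unfolding holomorphic_on_def
proof
  fix t assume "t \<in> {s. a + s *s d \<in> S}"
  then obtain L where L: "complex_linear L" "(f has_derivative L) (at (a + t *s d))"
    using assms unfolding holomorphic_n_def by blast
  have "((\<lambda>s. f (a + s *s d)) has_derivative (\<lambda>s. L (s *s d))) (at t)"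
    using diff_chain_at[OF has_derivative_complex_line L(2)] by (simp add: o_def)
  moreover have "(\<lambda>s. L (s *s d)) = (*) (L d)"
    using L(1) unfolding complex_linear_def by (auto simp: fun_eq_iff)
  ultimately have "((\<lambda>s. f (a + s *s d)) has_field_derivative L d) (at t)"
    by (simp add: has_field_derivative_def)
  then show "(\<lambda>s. f (a + s *s d)) field_differentiable at t within {s. a + s *s d \<in> S}"
    using field_differentiable_at_within field_differentiable_def by blast
qed

lemma holomorphic_n_eq_on_convex:
  assumes "open S" "convex S" "holomorphic_n f S" "holomorphic_n g S"
    and "a \<in> S" "e > 0" "\<forall>x\<in>ball a e. f x = g x" and "y \<in> S"
  shows "f y = g y"
proof -
  let ?line = "{s::complex. a + s *s (y - a) \<in> S}"
  let ?near = "{s::complex. a + s *s (y - a) \<in> S \<inter> ball a e}"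
  have "f (a + 1 *s (y - a)) = g (a + 1 *s (y - a))"
  proof (rule analytic_continuation_open[where s = ?near and s' = ?line
        and f = "\<lambda>s. f (a + s *s (y - a))" and g = "\<lambda>s. g (a + s *s (y - a))"])
    show "open ?near"
      by (rule open_complex_line_vimage) (use assms(1) in auto)
    show "open ?line"
      by (rule open_complex_line_vimage) (use assms(1) in auto)
    show "?near \<noteq> {}" using assms(5,6) by (auto intro!: exI[of _ 0])
    show "connected ?line"
      using convex_connected[OF convex_complex_line_vimage[OF assms(2)]] .
    show "(\<lambda>s. f (a + s *s (y - a))) holomorphic_on ?line"
      by (rule holomorphic_n_on_complex_line[OF assms(3)])
    show "(\<lambda>s. g (a + s *s (y - a))) holomorphic_on ?line"
      by (rule holomorphic_n_on_complex_line[OF assms(4)])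
    show "?near \<subseteq> ?line" "1 \<in> ?line" using assms(8) by auto
    show "\<And>s. s \<in> ?near \<Longrightarrow> f (a + s *s (y - a)) = g (a + s *s (y - a))"
      using assms(7) by auto
  qed
  then show ?thesis by simp
qed

lemma holomorphic_n_eq_on_connected:
  assumes "open S" "connected S" "holomorphic_n f S" "holomorphic_n g S"
    and "open V" "V \<noteq> {}" "V \<subseteq> S" "\<forall>x\<in>V. f x = g x" and "y \<in> S"
  shows "f y = g y"
proof -
  let ?agree_near = "\<lambda>x. \<exists>e>0. \<forall>z\<in>ball x e. f z = g z"
  obtain a e where "a \<in> V" "e > 0" "ball a e \<subseteq> V"
    using assms(5,6) open_contains_ball by blast
  then have "?agree_near a" "a \<in> S" using assms(7,8) by auto
  have "?agree_near y"
  proof (rule connected_induction_simple[where P = ?agree_near, OF assms(2) \<open>a \<in> S\<close> assms(9)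
        \<open>?agree_near a\<close>])
    fix x assume "x \<in> S"
    then obtain r where r: "r > 0" "ball x r \<subseteq> S" using assms(1) open_contains_ball by blast
    have "\<forall>p\<in>ball x r. \<forall>q\<in>ball x r. ?agree_near p \<longrightarrow> ?agree_near q"
    proof (intro ballI impI)
      fix p q assume "p \<in> ball x r" "q \<in> ball x r" "?agree_near p"
      obtain e' where "e' > 0" "\<forall>z\<in>ball p e'. f z = g z" using \<open>?agree_near p\<close> by blast
      then have "\<forall>z\<in>ball x r. f z = g z"
        using holomorphic_n_eq_on_convex[OF open_ball convex_ball holomorphic_n_subset[OF assms(3) r(2)]
            holomorphic_n_subset[OF assms(4) r(2)] \<open>p \<in> ball x r\<close>]
        by blast
      moreover obtain e'' where "e'' > 0" "ball q e'' \<subseteq> ball x r"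
        using \<open>q \<in> ball x r\<close> open_contains_ball by blast
      ultimately show "?agree_near q" by blast
    qed
    moreover have "x \<in> ball x r" using r(1) by simp
    moreover have "openin (top_of_set S) (ball x r)" using r by (simp add: open_subset)
    ultimately show "\<exists>T. openin (top_of_set S) T \<and> x \<in> T \<and> (\<forall>p\<in>T. \<forall>q\<in>T. ?agree_near p \<longrightarrow> ?agree_near q)"
      by blast
  qed
  then show ?thesis by auto
qed

lemma component_closure_meets_frontier:
  fixes U :: "'a::real_normed_vector set"
  assumes "open U" "connected U" "\<not> U \<subseteq> \<Omega>" "W \<in> components (U \<inter> \<Omega>)"
  obtains w where "w \<in> U" "w \<in> closure W" "w \<in> frontier \<Omega>"
proof -
  have "W \<noteq> {}" "W \<subseteq> U \<inter> \<Omega>"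
    using in_components_nonempty[OF assms(4)] in_components_subset[OF assms(4)] by auto
  then have "U \<inter> frontier W \<noteq> {}"
    using assms(2,3) by (intro connected_Int_frontier) auto
  then obtain w where "w \<in> U" "w \<in> frontier W" by blast
  moreover have "frontier W \<subseteq> frontier U \<union> frontier \<Omega>"
    using frontier_of_components_subset[OF assms(4)] frontier_Int_subset by blast
  moreover have "w \<notin> frontier U"
    using \<open>w \<in> U\<close> assms(1) by (simp add: frontier_def interior_open)
  ultimately show thesis using that frontier_def by auto
qed

lemma holomorphic_n_eq_on_component:
  assumes "holomorphic_n F U" "holomorphic_n f \<Omega>" "open U" "open \<Omega>"
    and "open V" "V \<subseteq> U \<inter> \<Omega>" "\<forall>z\<in>V. F z = f z" and "v \<in> V"
    and "z \<in> connected_component_set (U \<inter> \<Omega>) v"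
  shows "F z = f z"
proof -
  define W where "W = connected_component_set (U \<inter> \<Omega>) v"
  have "W \<subseteq> U \<inter> \<Omega>"
    unfolding W_def by (rule connected_component_subset)
  then have "holomorphic_n F W" "holomorphic_n f W"
    using holomorphic_n_subset[OF assms(1)] holomorphic_n_subset[OF assms(2)] by auto
  moreover have "open W" "connected W"
    unfolding W_def using assms(3,4) by (auto intro: open_connected_component)
  moreover have "v \<in> V \<inter> W"
    using assms(6,8) by (auto simp: W_def)
  ultimately show ?thesis
    using holomorphic_n_eq_on_connected[of W F f "V \<inter> W"] assms(5,7,9)
    unfolding W_def by blast
qed

lemma not_totally_unbounded_if_continuous_extension:
  fixes f F :: "complex ^ 'n \<Rightarrow> complex"
  assumes "open U" "connected U" "\<not> U \<subseteq> \<Omega>" "W \<in> components (U \<inter> \<Omega>)"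
    and "continuous_on U F" "\<forall>z\<in>W. F z = f z"
  shows "\<not> totally_unbounded f \<Omega>"
proof
  assume unbounded: "totally_unbounded f \<Omega>"
  obtain w where "w \<in> U" "w \<in> closure W" "w \<in> frontier \<Omega>"
    using component_closure_meets_frontier[OF assms(1-4)] by blast
  then obtain r where "r > 0" "cball w r \<subseteq> U"
    using assms(1) open_contains_cball by blast
  then have "bounded (F ` cball w r)"
    using assms(5) by (intro compact_imp_bounded compact_continuous_image compact_cball)
      (rule continuous_on_subset)
  obtain p where "p \<in> W" "dist p w < r"
    using \<open>w \<in> closure W\<close> \<open>r > 0\<close> closure_approachable by blast
  then have "p \<in> ball w r \<inter> \<Omega>"
    using in_components_subset[OF assms(4)] by (auto simp: dist_commute)
  define E where "E = connected_component_set (ball w r \<inter> \<Omega>) p"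
  have E: "E \<in> components (ball w r \<inter> \<Omega>)" "p \<in> E" "connected E"
    unfolding E_def using \<open>p \<in> ball w r \<inter> \<Omega>\<close> by (simp_all add: componentsI)
  have "E \<subseteq> ball w r \<inter> \<Omega>"
    unfolding E_def by (rule connected_component_subset)
  then have "E \<subseteq> U \<inter> \<Omega>"
    using ball_subset_cball \<open>cball w r \<subseteq> U\<close> by blast
  then have "E \<subseteq> W"
    using components_maximal[OF assms(4)] E(2,3) \<open>p \<in> W\<close> by blast
  then have "f ` E = F ` E"
    using assms(6) by (intro image_cong) auto
  moreover have "F ` E \<subseteq> F ` cball w r"
    using \<open>E \<subseteq> ball w r \<inter> \<Omega>\<close> ball_subset_cball by (intro image_mono) blast
  ultimately have "bounded (f ` E)"
    using \<open>bounded (F ` cball w r)\<close> bounded_subset by metis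
  then show False
    using unbounded \<open>w \<in> frontier \<Omega>\<close> \<open>r > 0\<close> E(1) unfolding totally_unbounded_def by blast
qed

theorem mainTheorem2:
  fixes \<Omega> :: "(complex ^ 'n) set" and f :: "complex ^ 'n \<Rightarrow> complex"
  assumes "open \<Omega>" and "holomorphic_n f \<Omega>" and "totally_unbounded f \<Omega>"
  shows "\<forall>U V :: (complex ^ 'n) set.
           open U \<and> open V \<and> connected U \<and> V \<noteq> {} \<and> V \<subseteq> U \<inter> \<Omega> \<and> U \<inter> \<Omega> \<noteq> U \<longrightarrow>
           \<not> (\<exists>F. holomorphic_n F U \<and> (\<forall>z\<in>V. F z = f z))"
proof (intro allI impI notI)
  fix U V :: "(complex ^ 'n) set"
  assume H: "open U \<and> open V \<and> connected U \<and> V \<noteq> {} \<and> V \<subseteq> U \<inter> \<Omega> \<and> U \<inter> \<Omega> \<noteq> U"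
    and "\<exists>F. holomorphic_n F U \<and> (\<forall>z\<in>V. F z = f z)"
  then obtain F v where F: "holomorphic_n F U" "\<forall>z\<in>V. F z = f z" and "v \<in> V" by blast
  let ?W = "connected_component_set (U \<inter> \<Omega>) v"
  have "?W \<in> components (U \<inter> \<Omega>)"
    using H \<open>v \<in> V\<close> by (auto intro: componentsI)
  moreover have "\<forall>z\<in>?W. F z = f z"
    using holomorphic_n_eq_on_component[OF F(1) assms(2) _ assms(1) _ _ F(2) \<open>v \<in> V\<close>] H by blast
  ultimately have "\<not> totally_unbounded f \<Omega>"
    using H holomorphic_n_imp_continuous_on[OF F(1)]
    by (intro not_totally_unbounded_if_continuous_extension[of U]) auto
  then show False using assms(3) by contradiction
qed

end
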